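(* Let $n$ be a positive odd integer and let $a$ be any integer. Let $q\neq 1$ be a positive real number, and define the $n\times n$ matrix $$Q=\left[q^{-\{\frac{aj-(a+1)k}{n}\}}\right]_{1\leqslant j,k\leqslant n}.$$ Then $$\det(Q)=\left(\frac{a(a+1)}{n}\right)(1-q^{-1})^{n-1}.$$ Moreover, when $\gcd(a(a+1),n)=1$, $$Q^{-1}=\frac{1}{1-q^{-1}}[f(j,k)]_{1\leqslant j,k\leqslant n},$$ where $$f(j,k)=[\![\,n\mid(a+1)j-ak\,]\!]-q^{-1/n}[\![\,n\mid (a+1)j-ak-1\,]\!].$$
   Context: For a real number $x$, $\{x\}=x-\lfloor x\rfloor$ is its fractional part. For a statement $S$, $[\![S]\!]$ equals $1$ if $S$ holds and $0$ otherwise. $q^{-1/n}$ denotes the positive real $n$th root of $q^{-1}$. $\left(\frac{\cdot}{n}\right)$ denotes the Jacobi symbol modulo the positive odd integer $n$ (equal to $0$ when the argument is not coprime to $n$, and $\left(\frac{\cdot}{1}\right)=1$). *)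

theory Defs
  imports "Jordan_Normal_Form.Determinant" "HOL-Number_Theory.Residues"
begin

definition jacobi :: "int \<Rightarrow> nat \<Rightarrow> int" where
  "jacobi a n = (\<Prod>p\<in>prime_factors n. Legendre a (int p) ^ multiplicity p n)"

text \<open>The matrix Q, 0-indexed: entry (j,k) corresponds to (j+1,k+1) of the paper.\<close>
definition Qmat :: "nat \<Rightarrow> int \<Rightarrow> real \<Rightarrow> real mat" where
  "Qmat n a q = mat n n (\<lambda>(j,k).
     q powr (- frac (real_of_int (a * int (j+1) - (a+1) * int (k+1)) / real n)))"

definition fent :: "nat \<Rightarrow> int \<Rightarrow> real \<Rightarrow> nat \<Rightarrow> nat \<Rightarrow> real" where
  "fent n a q j k =
     of_bool (int n dvd (a+1) * int j - a * int k)
     - q powr (- 1 / real n) * of_bool (int n dvd (a+1) * int j - a * int k - 1)"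

definition Qinv :: "nat \<Rightarrow> int \<Rightarrow> real \<Rightarrow> real mat" where
  "Qinv n a q = (1 / (1 - 1 / q)) \<cdot>\<^sub>m mat n n (\<lambda>(j,k). fent n a q (j+1) (k+1))"

end

(*
  Put w = q powr (-1/n). The (j,k) entry of Q is w^r with r the least nonnegative residue of
  a j - (a+1) k modulo n. If a(a+1) is prime to n, the affine bijections j -> 1 - a j and
  k -> -(a+1) k of Z/n carry Q to the matrix D = [w^((k - j) mod n)], so det Q is det D times
  the signs of these two permutations. Subtracting w times each row of D from the previous one
  makes D triangular, and det D = (1 - w^n)^(n-1) = (1 - 1/q)^(n-1). The sign of x -> c x on Z/n
  is the Jacobi symbol (c/n) (Zolotarev-Frobenius): for a prime p, comparing the Vandermonde
  product of the permuted residues with Euler's criterion gives the Legendre symbol, and for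
  n = m p the permutation splits along the digits of x = u + m v. If a or a+1 shares a factor
  with n, two rows or two columns of Q coincide. Finally, in each entry of Q times the claimed
  inverse the summation index l enters only through (a+1)(l+1); reindexing along this bijection
  of Z/n collapses the sum to w^r - w * w^(r-1), which vanishes off the diagonal.
*)

theory Submission
  imports Defs "HOL-Number_Theory.Euler_Criterion"
begin

section \<open>Signs of permutations\<close>

lemma sign_funpow: "permutation p \<Longrightarrow> sign (p ^^ k) = sign p ^ k"
proof (induction k)
  case (Suc k)
  have "permutation (p ^^ k)"
    using Suc.prems by (induction k) (simp_all add: permutation_compose)
  then have "sign (p \<circ> p ^^ k) = sign p * sign (p ^^ k)"
    by (rule sign_compose[OF Suc.prems])
  with Suc show ?case
    by (simp only: funpow.simps power_Suc)
qed simp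

lemma sign_power_odd: "odd k \<Longrightarrow> sign p ^ k = sign p"
  by (cases p rule: sign_cases) simp_all

lemma sign_blocks:
  fixes key :: "'a \<Rightarrow> nat"
  assumes fin: "finite S" and perm: "\<And>k. k < K \<Longrightarrow> g k permutes {x\<in>S. key x = k}"
  shows "(\<lambda>x. if x \<in> S \<and> key x < K then g (key x) x else x) permutes S \<and>
         sign (\<lambda>x. if x \<in> S \<and> key x < K then g (key x) x else x) = (\<Prod>k<K. sign (g k))"
  using perm
proof (induction K)
  case 0
  have "(\<lambda>x. if x \<in> S \<and> key x < 0 then g (key x) x else x) = id"
    by auto
  then show ?case by simp
next
  case (Suc K)
  let ?h = "\<lambda>x. if x \<in> S \<and> key x < K then g (key x) x else x"
  let ?h' = "\<lambda>x. if x \<in> S \<and> key x < Suc K then g (key x) x else x"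
  have IH: "?h permutes S \<and> sign ?h = (\<Prod>k<K. sign (g k))"
    using Suc by auto
  have gK: "g K permutes {x\<in>S. key x = K}"
    using Suc.prems by auto
  then have gK_S: "g K permutes S"
    by (rule permutes_subset) auto
  have "g K (g (key x) x) = g (key x) x" if "x \<in> S" "key x < K" for x
  proof -
    have "g (key x) permutes {y\<in>S. key y = key x}"
      using Suc.prems that by auto
    then have "g (key x) x \<in> {y\<in>S. key y = key x}"
      using that permutes_in_image by fastforce
    then show ?thesis
      using that by (intro permutes_not_in[OF gK]) auto
  qed
  moreover have "g K x = x" if "\<not> (x \<in> S \<and> key x = K)" for x
    using that by (intro permutes_not_in[OF gK]) auto
  ultimately have split: "?h' = g K \<circ> ?h"
    by (auto simp: fun_eq_iff less_Suc_eq)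
  have "?h' permutes S"
    unfolding split using IH gK_S by (blast intro: permutes_compose)
  moreover have "sign ?h' = sign (g K) * sign ?h"
    unfolding split using IH gK_S by (simp add: sign_compose permutes_imp_permutation[OF fin])
  ultimately show ?case
    using IH by (simp add: mult.commute)
qed

lemma sign_fibrewise:
  fixes key :: "'a \<Rightarrow> nat" and e :: "nat \<Rightarrow> 'b \<Rightarrow> 'a"
  assumes "finite A" "finite S"
    and perm: "\<And>k. k < K \<Longrightarrow> g k permutes A"
    and bij: "\<And>k. k < K \<Longrightarrow> bij_betw (e k) A {x\<in>S. key x = k}"
    and inv: "\<And>k x. k < K \<Longrightarrow> x \<in> A \<Longrightarrow> e' k (e k x) = x"
  shows "(\<lambda>x. if x \<in> S \<and> key x < K then e (key x) (g (key x) (e' (key x) x)) else x) permutes S \<and>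
         sign (\<lambda>x. if x \<in> S \<and> key x < K then e (key x) (g (key x) (e' (key x) x)) else x)
           = (\<Prod>k<K. sign (g k))"
proof -
  define h where "h k = (\<lambda>x. if x \<in> {y\<in>S. key y = k} then e k (g k (e' k x)) else x)" for k
  have transfer: "permutes_bij_finite (g k) A {x\<in>S. key x = k} (e k) (e' k)" if "k < K" for k
    using assms that by unfold_locales auto
  have "h k permutes {x\<in>S. key x = k}" if "k < K" for k
    unfolding h_def using permutes_bij.permutes_p'[OF permutes_bij_finite.axioms(1)[OF transfer[OF that]]] .
  moreover have "sign (h k) = sign (g k)" if "k < K" for k
    unfolding h_def using permutes_bij_finite.sign_p'[OF transfer[OF that]] .
  moreover have "(\<lambda>x. if x \<in> S \<and> key x < K then h (key x) x else x)
      = (\<lambda>x. if x \<in> S \<and> key x < K then e (key x) (g (key x) (e' (key x) x)) else x)"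
    by (auto simp: h_def)
  ultimately show ?thesis
    using sign_blocks[OF \<open>finite S\<close>, of K h key] by simp
qed

definition vandermonde :: "nat \<Rightarrow> (nat \<Rightarrow> 'a :: comm_ring_1) \<Rightarrow> 'a" where
  "vandermonde n z = (\<Prod>(i,j)\<in>{(i,j). i < j \<and> j < n}. z j - z i)"

lemma finite_ordered_pairs: "finite {(i,j). i < j \<and> j < (n::nat)}"
  by (rule finite_subset[of _ "{..<n} \<times> {..<n}"]) auto

lemma card_ordered_pairs: "2 * card {(i,j). i < j \<and> j < (n::nat)} = n * (n - 1)"
proof (induction n)
  case (Suc n)
  have split: "{(i,j). i < j \<and> j < Suc n} = {(i,j). i < j \<and> j < n} \<union> (\<lambda>i. (i,n)) ` {..<n}"
    by auto
  have "card {(i,j). i < j \<and> j < Suc n} = card {(i,j). i < j \<and> j < n} + n"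
    unfolding split by (subst card_Un_disjoint) (auto simp: finite_ordered_pairs card_image inj_on_def)
  with Suc show ?case by (cases n) (auto simp: algebra_simps)
qed simp

lemma vandermonde_swap_adjacent:
  assumes "Suc k < n"
  shows "vandermonde n (z \<circ> Transposition.transpose k (Suc k)) = - vandermonde n z"
proof -
  let ?t = "Transposition.transpose k (Suc k)"
  let ?P = "{(i,j). i < j \<and> j < n}"
  let ?P' = "?P - {(k, Suc k)}"
  let ?d = "\<lambda>(i,j). z j - z i"
  define \<phi> where "\<phi> = map_prod ?t ?t"
  have kP: "(k, Suc k) \<in> ?P" using assms by auto
  have \<phi>_invol: "\<phi> (\<phi> x) = x" for x
    by (cases x) (simp add: \<phi>_def)
  have \<phi>_P': "\<phi> x \<in> ?P'" if "x \<in> ?P'" for x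
    using that assms by (cases x) (auto simp: \<phi>_def Transposition.transpose_def)
  have bij: "bij_betw \<phi> ?P' ?P'"
    by (rule bij_betw_byWitness[where f' = \<phi>]; (intro ballI image_subsetI \<phi>_P' \<phi>_invol)?)
  have "vandermonde n (z \<circ> ?t) = (\<Prod>x\<in>?P. ?d (\<phi> x))"
    unfolding vandermonde_def \<phi>_def by (intro prod.cong) auto
  also have "\<dots> = ?d (\<phi> (k, Suc k)) * (\<Prod>x\<in>?P'. ?d (\<phi> x))"
    by (rule prod.remove[OF finite_ordered_pairs kP])
  also have "(\<Prod>x\<in>?P'. ?d (\<phi> x)) = (\<Prod>x\<in>?P'. ?d x)"
    by (rule prod.reindex_bij_betw[OF bij])
  also have "?d (\<phi> (k, Suc k)) = - ?d (k, Suc k)"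
    by (simp add: \<phi>_def)
  also have "- ?d (k, Suc k) * (\<Prod>x\<in>?P'. ?d x) = - vandermonde n z"
    unfolding vandermonde_def prod.remove[OF finite_ordered_pairs kP] by (simp add: algebra_simps)
  finally show ?thesis .
qed

lemma vandermonde_apply_adj_transps:
  assumes "\<forall>k\<in>set ks. Suc k < n"
  shows "vandermonde n (z \<circ> apply_adj_transps ks) = (-1) ^ length ks * vandermonde n z"
  using assms
proof (induction ks arbitrary: z)
  case (Cons k ks)
  have "vandermonde n (z \<circ> apply_adj_transps (k # ks))
      = vandermonde n ((z \<circ> Transposition.transpose k (Suc k)) \<circ> apply_adj_transps ks)"
    by (simp add: o_assoc)
  also have "\<dots> = (-1) ^ length ks * vandermonde n (z \<circ> Transposition.transpose k (Suc k))"
    by (rule Cons.IH) (use Cons.prems in simp)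
  also have "\<dots> = (-1) ^ length (k # ks) * vandermonde n z"
    using Cons.prems by (simp add: vandermonde_swap_adjacent)
  finally show ?case .
qed simp

lemma vandermonde_transpose:
  assumes "a < n" "b < n" "a \<noteq> b"
  shows "vandermonde n (z \<circ> Transposition.transpose a b) = - vandermonde n z"
proof -
  have "vandermonde n (z \<circ> Transposition.transpose a b) = - vandermonde n z" if "a < b" "b < n" for a b
  proof -
    have "odd (length (adj_transp_seq a b))"
      using that by (simp add: length_adj_transp_seq)
    then show ?thesis
      using that vandermonde_apply_adj_transps[of "adj_transp_seq a b" n z]
      by (simp add: adj_transp_seq_correct set_adj_transp_seq)
  qed
  from this[of a b] this[of b a] assms show ?thesis
    by (cases "a < b") (auto simp: transpose_commute)
qed

lemma vandermonde_permute:
  assumes "p permutes {0..<n}"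
  shows "vandermonde n (z \<circ> p) = of_int (sign p) * vandermonde n z"
  using assms finite_atLeastLessThan
proof (induction arbitrary: z rule: permutes_induct)
  case (swap a b p)
  have "vandermonde n (z \<circ> (Transposition.transpose a b \<circ> p))
      = of_int (sign p) * vandermonde n (z \<circ> Transposition.transpose a b)"
    using swap.IH[of "z \<circ> Transposition.transpose a b"] by (simp only: o_assoc)
  moreover have "permutation p"
    using swap(4) by (rule permutes_imp_permutation[OF finite_atLeastLessThan])
  then have "sign (Transposition.transpose a b \<circ> p) = - sign p"
    using swap(3) by (simp add: sign_compose permutation_swap_id sign_swap_id)
  moreover have "vandermonde n (z \<circ> Transposition.transpose a b) = - vandermonde n z"
    by (rule vandermonde_transpose) (use swap(1-3) in auto)
  ultimately show ?case
    by (simp only: of_int_minus mult_minus_left mult_minus_right)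
qed simp

section \<open>Affine permutations and the Zolotarev--Frobenius lemma\<close>

definition affine_perm :: "nat \<Rightarrow> int \<Rightarrow> int \<Rightarrow> nat \<Rightarrow> nat" where
  "affine_perm n c t x = (if x < n then nat ((c * int x + t) mod int n) else x)"

lemma affine_perm_less: "x < n \<Longrightarrow> affine_perm n c t x < n"
  unfolding affine_perm_def by (simp add: nat_less_iff)

lemma of_nat_affine_perm: "x < n \<Longrightarrow> int (affine_perm n c t x) = (c * int x + t) mod int n"
  unfolding affine_perm_def by simp

lemma affine_perm_permutes:
  assumes "coprime c (int n)"
  shows "affine_perm n c t permutes {0..<n}"
proof (rule bij_imp_permutes)
  have "inj_on (affine_perm n c t) {0..<n}"
  proof (rule inj_onI)
    fix x y assume "x \<in> {0..<n}" "y \<in> {0..<n}" "affine_perm n c t x = affine_perm n c t y"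
    then have "[c * int x + t = c * int y + t] (mod int n)" "x < n" "y < n"
      by (auto simp: cong_def dest: arg_cong[of _ _ int] simp: of_nat_affine_perm)
    then have "[int x = int y] (mod int n)"
      using assms by (auto simp: cong_add_rcancel cong_mult_lcancel)
    then show "x = y"
      using \<open>x < n\<close> \<open>y < n\<close> by (simp add: cong_def)
  qed
  moreover have "affine_perm n c t ` {0..<n} \<subseteq> {0..<n}"
    by (auto simp: affine_perm_less)
  ultimately show "bij_betw (affine_perm n c t) {0..<n} {0..<n}"
    by (simp add: bij_betw_def endo_inj_surj)
qed (simp add: affine_perm_def)

lemma permutation_affine_perm: "coprime c (int n) \<Longrightarrow> permutation (affine_perm n c t)"
  using affine_perm_permutes permutes_imp_permutation by blast

lemma affine_perm_compose:
  "affine_perm n a s \<circ> affine_perm n c t = affine_perm n (a * c) (a * t + s)"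
proof
  fix x
  show "(affine_perm n a s \<circ> affine_perm n c t) x = affine_perm n (a * c) (a * t + s) x"
  proof (cases "x < n")
    case True
    have "(a * ((c * int x + t) mod int n) + s) mod int n = (a * (c * int x + t) + s) mod int n"
      by (metis mod_add_left_eq mod_mult_right_eq)
    then show ?thesis
      using True affine_perm_less[OF True] by (simp add: affine_perm_def algebra_simps)
  qed (simp add: affine_perm_def)
qed

lemma sign_affine_perm_shift: "n > 0 \<Longrightarrow> sign (affine_perm n 1 1) = (-1) ^ (n - 1)"
proof (induction n rule: nat_induct_non_zero)
  case 1
  have "affine_perm 1 1 1 = id"
    by (auto simp: affine_perm_def)
  then show ?case by simp
next
  case (Suc n)
  have "affine_perm (Suc n) 1 1 = Transposition.transpose 0 n \<circ> affine_perm n 1 1"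
  proof
    fix x
    consider "x < n - 1" | "x = n - 1" | "x \<ge> n" by linarith
    then show "affine_perm (Suc n) 1 1 x = (Transposition.transpose 0 n \<circ> affine_perm n 1 1) x"
      using Suc.hyps by cases (auto simp: affine_perm_def Transposition.transpose_def of_nat_diff add.commute)
  qed
  then have "sign (affine_perm (Suc n) 1 1) = sign (Transposition.transpose 0 n) * sign (affine_perm n 1 1)"
    by (simp add: sign_compose permutation_swap_id permutation_affine_perm)
  with Suc show ?case
    by (cases n) (auto simp: sign_swap_id)
qed

lemma sign_affine_perm_translate:
  assumes "odd n" "coprime c (int n)"
  shows "sign (affine_perm n c t) = sign (affine_perm n c 0)"
proof -
  have n: "n > 0" using assms(1) by (rule odd_pos)
  have "affine_perm n 1 (int k) = affine_perm n 1 1 ^^ k" for k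
  proof (induction k)
    case (Suc k)
    have "affine_perm n 1 (int (Suc k)) = affine_perm n 1 1 \<circ> affine_perm n 1 (int k)"
      by (simp add: affine_perm_compose add.commute)
    with Suc show ?case by simp
  qed (auto simp: affine_perm_def)
  moreover have "affine_perm n 1 t = affine_perm n 1 (int (nat (t mod int n)))"
    using n by (simp add: affine_perm_def fun_eq_iff mod_add_right_eq)
  ultimately have "affine_perm n 1 t = affine_perm n 1 1 ^^ nat (t mod int n)"
    by metis
  then have "sign (affine_perm n 1 t) = sign (affine_perm n 1 1) ^ nat (t mod int n)"
    by (simp only: sign_funpow[OF permutation_affine_perm[OF coprime_1_left]])
  also have "sign (affine_perm n 1 1) = 1"
    using sign_affine_perm_shift[OF n] assms(1) n by simp
  finally have "sign (affine_perm n 1 t) = 1" by simp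
  moreover have "affine_perm n c t = affine_perm n 1 t \<circ> affine_perm n c 0"
    by (simp add: affine_perm_compose)
  ultimately show ?thesis
    using assms(2) by (simp add: sign_compose permutation_affine_perm)
qed

lemma vandermonde_affine_perm_cong:
  "[vandermonde n (int \<circ> affine_perm n c t) = c ^ card {(i,j). i < j \<and> j < n} * vandermonde n int] (mod int n)"
proof -
  let ?P = "{(i,j). i < j \<and> j < n}"
  have "[vandermonde n (int \<circ> affine_perm n c t) = (\<Prod>(i,j)\<in>?P. c * (int j - int i))] (mod int n)"
    unfolding vandermonde_def
  proof (rule cong_prod)
    fix x assume "x \<in> ?P"
    then obtain i j where x: "x = (i,j)" "i < j" "j < n" by auto
    have "[(c * int j + t) mod int n - (c * int i + t) mod int n = c * int j + t - (c * int i + t)] (mod int n)"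
      by (simp add: cong_def mod_diff_eq)
    then show "[(case x of (i,j) \<Rightarrow> (int \<circ> affine_perm n c t) j - (int \<circ> affine_perm n c t) i)
             = (case x of (i,j) \<Rightarrow> c * (int j - int i))] (mod int n)"
      using x by (simp add: of_nat_affine_perm algebra_simps)
  qed
  also have "(\<Prod>(i,j)\<in>?P. c * (int j - int i)) = c ^ card ?P * vandermonde n int"
    unfolding vandermonde_def by (simp add: prod.distrib case_prod_unfold)
  finally show ?thesis .
qed

lemma coprime_vandermonde_int:
  assumes "prime p"
  shows "coprime (vandermonde p int) (int p)"
proof -
  have "\<not> int p dvd vandermonde p int"
  proof
    assume "int p dvd vandermonde p int"
    then obtain i j where "i < j" "j < p" "int p dvd int j - int i"
      unfolding vandermonde_def using assms
      by (auto simp: prime_dvd_prod_iff[OF finite_ordered_pairs])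
    then show False
      using zdvd_not_zless[of "int j - int i" "int p"] by auto
  qed
  then show ?thesis
    using assms by (simp add: prime_imp_coprime coprime_commute)
qed

lemma Legendre_coprime_cases:
  assumes "prime p" "coprime c (int p)"
  shows "Legendre c (int p) = 1 \<or> Legendre c (int p) = -1"
proof -
  have "\<not> [c = 0] (mod int p)"
    using assms by (auto simp: cong_0_iff prime_gt_1_nat)
  then show ?thesis
    unfolding Legendre_def by auto
qed

lemma pm_one_eq_if_cong:
  fixes x y :: int
  assumes "[x = y] (mod m)" "x = 1 \<or> x = -1" "y = 1 \<or> y = -1" "m > 2"
  shows "x = y"
proof (rule ccontr)
  assume "x \<noteq> y"
  with assms(2,3) have "m dvd 2"
    using assms(1) by (auto simp: cong_iff_dvd_diff dvd_minus_iff)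
  with assms(4) show False
    using zdvd_imp_le by fastforce
qed

lemma zolotarev:
  assumes p: "prime p" "odd p" and c: "coprime c (int p)"
  shows "sign (affine_perm p c 0) = Legendre c (int p)"
proof -
  define N where "N = card {(i,j). i < j \<and> j < p}"
  have p2: "p > 2"
    using p by (metis dvd_refl le_neq_implies_less prime_ge_2_nat)
  have "[sign (affine_perm p c 0) * vandermonde p int = c ^ N * vandermonde p int] (mod int p)"
    using vandermonde_affine_perm_cong[of p c 0]
      vandermonde_permute[OF affine_perm_permutes[OF c], of int 0]
    unfolding N_def by simp
  then have sign_cong: "[sign (affine_perm p c 0) = c ^ N] (mod int p)"
    using cong_mult_rcancel[OF coprime_vandermonde_int[OF p(1)]] by blast
  have "N = p * ((p - 1) div 2)"
    using card_ordered_pairs[of p] p(2) unfolding N_def by (auto elim!: oddE)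
  then have "c ^ N = (c ^ ((p - 1) div 2)) ^ p"
    by (simp only: power_mult[symmetric] mult.commute)
  moreover have "[Legendre c (int p) ^ p = (c ^ ((p - 1) div 2)) ^ p] (mod int p)"
    using euler_criterion[OF p(1) p2] by (rule cong_pow)
  moreover have "Legendre c (int p) ^ p = Legendre c (int p)"
    using Legendre_coprime_cases[OF p(1) c] p(2) by auto
  ultimately have "[sign (affine_perm p c 0) = Legendre c (int p)] (mod int p)"
    using sign_cong by (metis cong_sym cong_trans)
  then show ?thesis
    using Legendre_coprime_cases[OF p(1) c] p2 by (intro pm_one_eq_if_cong) (auto simp: sign_def)
qed

lemma jacobi_mult_prime:
  assumes p: "prime p" and m: "m > 0"
  shows "jacobi c (p * m) = Legendre c (int p) * jacobi c m"
proof -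
  let ?S = "prime_factors (p * m)"
  let ?L = "\<lambda>q. Legendre c (int q)"
  have S: "?S = insert p (prime_factors m)"
    using prime_factors_product[of p m] p m by (auto simp: prime_prime_factors)
  have "multiplicity q (p * m) = multiplicity q m + (if q = p then 1 else 0)" if "q \<in> ?S" for q
    using that p m
    by (auto simp: prime_elem_multiplicity_mult_distrib prime_multiplicity_other in_prime_factors_iff)
  then have "jacobi c (p * m) = (\<Prod>q\<in>?S. ?L q ^ multiplicity q m * (if q = p then ?L q else 1))"
    unfolding jacobi_def by (intro prod.cong) auto
  also have "\<dots> = (\<Prod>q\<in>?S. ?L q ^ multiplicity q m) * (\<Prod>q\<in>?S. if q = p then ?L q else 1)"
    by (rule prod.distrib)
  also have "(\<Prod>q\<in>?S. if q = p then ?L q else 1) = ?L p"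
    using S by (simp add: prod.delta)
  also have "(\<Prod>q\<in>?S. ?L q ^ multiplicity q m) = jacobi c m"
    unfolding jacobi_def
    by (rule prod.mono_neutral_right) (use S m p in \<open>auto simp: not_dvd_imp_multiplicity_0 in_prime_factors_iff\<close>)
  finally show ?thesis by simp
qed

lemma jacobi_not_coprime:
  assumes n: "n > 0" and "\<not> coprime c (int n)"
  shows "jacobi c n = 0"
proof -
  have "nat (gcd c (int n)) \<noteq> 1"
    using assms by (simp add: coprime_iff_gcd_eq_1 nat_eq_iff)
  then obtain q where q: "prime q" "q dvd nat (gcd c (int n))"
    using prime_factor_nat by blast
  then have "int q dvd gcd c (int n)"
    using dvd_nat_abs_iff[of q "gcd c (int n)"] by simp
  then have "int q dvd c" "q dvd n"
    by simp_all
  then have "q \<in> prime_factors n" "Legendre c (int q) = 0"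
    using q(1) n by (auto simp: in_prime_factors_iff Legendre_def cong_0_iff)
  moreover from this(1) have "multiplicity q n > 0"
    by (simp add: prime_factors_multiplicity)
  ultimately show ?thesis
    unfolding jacobi_def by (intro prod_zero) auto
qed

lemma mult_mod_mixed_radix:
  fixes c u v m p :: int
  assumes "m > 0" "p \<ge> 0"
  shows "(c * (u + m * v)) mod (m * p) = (c * u) mod m + m * ((c * v + (c * u) div m) mod p)"
proof -
  have expand: "c * (u + m * v) = c * u + m * (c * v)"
    by (simp add: algebra_simps)
  have "(c * (u + m * v)) mod (m * p) = m * ((c * (u + m * v)) div m mod p) + (c * (u + m * v)) mod m"
    using assms(2) by (rule zmod_zmult2_eq)
  also have "(c * (u + m * v)) div m = c * v + (c * u) div m"
    unfolding expand using assms(1) by simp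
  also have "(c * (u + m * v)) mod m = (c * u) mod m"
    unfolding expand by simp
  finally show ?thesis by simp
qed

lemma digits_less: "u < m \<Longrightarrow> v < p \<Longrightarrow> u + m * v < m * (p::nat)"
proof -
  assume "u < m" "v < p"
  then have "u + m * v < m * (v + 1)" by simp
  also have "\<dots> \<le> m * p" using \<open>v < p\<close> by (intro mult_left_mono) auto
  finally show ?thesis .
qed

lemma sign_permute_low_digit:
  fixes m p :: nat
  assumes "m > 0" and perm: "\<And>v. v < p \<Longrightarrow> g v permutes {0..<m}"
  shows "(\<lambda>x. if x \<in> {0..<m * p} \<and> x div m < p then g (x div m) (x mod m) + m * (x div m) else x)
           permutes {0..<m * p} \<and>
         sign (\<lambda>x. if x \<in> {0..<m * p} \<and> x div m < p then g (x div m) (x mod m) + m * (x div m) else x)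
           = (\<Prod>v<p. sign (g v))"
proof (rule sign_fibrewise[where key = "\<lambda>x. x div m" and e = "\<lambda>v u. u + m * v" and e' = "\<lambda>_ x. x mod m"])
  show "bij_betw (\<lambda>u. u + m * v) {0..<m} {x \<in> {0..<m * p}. x div m = v}" if "v < p" for v
  proof (rule bij_betw_byWitness[where f' = "\<lambda>x. x mod m"])
    show "(\<lambda>u. u + m * v) ` {0..<m} \<subseteq> {x \<in> {0..<m * p}. x div m = v}"
      using that digits_less by (intro image_subsetI) auto
  qed (use assms(1) in \<open>auto simp: mult.commute\<close>)
qed (simp_all add: perm)

lemma sign_permute_high_digit:
  fixes m p :: nat
  assumes "m > 0" and perm: "\<And>u. u < m \<Longrightarrow> h u permutes {0..<p}"
  shows "(\<lambda>x. if x \<in> {0..<m * p} \<and> x mod m < m then x mod m + m * h (x mod m) (x div m) else x)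
           permutes {0..<m * p} \<and>
         sign (\<lambda>x. if x \<in> {0..<m * p} \<and> x mod m < m then x mod m + m * h (x mod m) (x div m) else x)
           = (\<Prod>u<m. sign (h u))"
proof (rule sign_fibrewise[where key = "\<lambda>x. x mod m" and e = "\<lambda>u v. u + m * v" and e' = "\<lambda>_ x. x div m"])
  show "bij_betw (\<lambda>v. u + m * v) {0..<p} {x \<in> {0..<m * p}. x mod m = u}" if "u < m" for u
  proof (rule bij_betw_byWitness[where f' = "\<lambda>x. x div m"])
    show "(\<lambda>v. u + m * v) ` {0..<p} \<subseteq> {x \<in> {0..<m * p}. x mod m = u}"
      using that digits_less by (intro image_subsetI) auto
    show "(\<lambda>x. x div m) ` {x \<in> {0..<m * p}. x mod m = u} \<subseteq> {0..<p}"
      by (auto simp: less_mult_imp_div_less mult.commute)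
  qed (use that in \<open>auto simp: mult.commute\<close>)
qed (use assms in \<open>simp_all add: perm\<close>)

lemma affine_perm_mult_digits:
  assumes "m > 0" "x < m * p"
  shows "affine_perm (m * p) c 0 x
    = affine_perm m c 0 (x mod m) + m * affine_perm p c ((c * int (x mod m)) div int m) (x div m)"
proof -
  have "x div m < p"
    using assms(2) by (simp add: less_mult_imp_div_less mult.commute)
  have x: "int x = int (x mod m) + int m * int (x div m)"
    using mod_mult_div_eq[of x m] by (metis of_nat_add of_nat_mult)
  have "int (affine_perm (m * p) c 0 x) = (c * int x) mod (int m * int p)"
    using assms(2) by (simp add: of_nat_affine_perm)
  also have "\<dots> = (c * int (x mod m)) mod int m
      + int m * ((c * int (x div m) + (c * int (x mod m)) div int m) mod int p)"
    unfolding x using assms(1) by (intro mult_mod_mixed_radix) simp_all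
  also have "\<dots> = int (affine_perm m c 0 (x mod m) + m * affine_perm p c ((c * int (x mod m)) div int m) (x div m))"
    using assms(1) \<open>x div m < p\<close> by (simp add: of_nat_affine_perm)
  finally show ?thesis
    by (simp only: of_nat_eq_iff)
qed

lemma sign_affine_perm_mult:
  assumes odd: "odd m" "odd p" and c: "coprime c (int m)" "coprime c (int p)"
  shows "sign (affine_perm (m * p) c 0) = sign (affine_perm m c 0) * sign (affine_perm p c 0)"
proof -
  let ?S = "{0..<m * p}"
  have m: "m > 0"
    using odd(1) by (rule odd_pos)
  define carry where "carry u = (c * int u) div int m" for u
  \<comment> \<open>in the digits of \<open>x = u + m v\<close> (\<open>u < m\<close>, \<open>v < p\<close>), multiplication by \<open>c\<close> modulo \<open>m p\<close>
      is an affine map of \<open>v\<close> modulo \<open>p\<close> depending on \<open>u\<close>, followed by multiplication of \<open>u\<close> by \<open>c\<close> modulo \<open>m\<close>\<close>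
  define \<tau> where "\<tau> x = (if x \<in> ?S \<and> x div m < p then affine_perm m c 0 (x mod m) + m * (x div m) else x)" for x
  define \<rho> where "\<rho> x = (if x \<in> ?S \<and> x mod m < m
      then x mod m + m * affine_perm p c (carry (x mod m)) (x div m) else x)" for x
  have \<tau>: "\<tau> permutes ?S \<and> sign \<tau> = (\<Prod>v<p. sign (affine_perm m c 0))"
    unfolding \<tau>_def using m by (rule sign_permute_low_digit) (rule affine_perm_permutes[OF c(1)])
  have \<rho>: "\<rho> permutes ?S \<and> sign \<rho> = (\<Prod>u<m. sign (affine_perm p c (carry u)))"
    unfolding \<rho>_def using m by (rule sign_permute_high_digit) (rule affine_perm_permutes[OF c(2)])
  have "affine_perm (m * p) c 0 = \<tau> \<circ> \<rho>"
  proof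
    fix x
    show "affine_perm (m * p) c 0 x = (\<tau> \<circ> \<rho>) x"
    proof (cases "x < m * p")
      case True
      define w where "w = affine_perm p c (carry (x mod m)) (x div m)"
      have "w < p"
        using True unfolding w_def by (simp add: affine_perm_less less_mult_imp_div_less mult.commute)
      then have "x mod m + m * w \<in> ?S" "(x mod m + m * w) div m = w" "(x mod m + m * w) mod m = x mod m"
        using m digits_less[of "x mod m" m w p] by auto
      moreover have "\<rho> x = x mod m + m * w"
        using True m unfolding \<rho>_def w_def by simp
      ultimately show ?thesis
        using True m \<open>w < p\<close> affine_perm_mult_digits[of m x p c] by (simp add: \<tau>_def w_def carry_def)
    qed (simp add: \<tau>_def \<rho>_def affine_perm_def)
  qed
  moreover have "permutation \<tau>" "permutation \<rho>"
    using \<tau> \<rho> by (auto intro: permutes_imp_permutation[OF finite_atLeastLessThan])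
  ultimately have "sign (affine_perm (m * p) c 0) = sign \<tau> * sign \<rho>"
    by (simp only: sign_compose)
  also have "sign \<tau> = sign (affine_perm m c 0)"
    using \<tau> odd(2) by (simp add: sign_power_odd)
  also have "sign \<rho> = sign (affine_perm p c 0)"
  proof -
    have "(\<Prod>u<m. sign (affine_perm p c (carry u))) = (\<Prod>u<m. sign (affine_perm p c 0))"
      using odd(2) c(2) by (intro prod.cong refl sign_affine_perm_translate)
    then show ?thesis
      using \<rho> odd(1) by (simp add: sign_power_odd)
  qed
  finally show ?thesis .
qed

theorem zolotarev_frobenius:
  assumes "odd n" "coprime c (int n)"
  shows "sign (affine_perm n c t) = jacobi c n"
  using assms
proof (induction n arbitrary: t rule: less_induct)
  case (less n)
  have "sign (affine_perm n c t) = sign (affine_perm n c 0)"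
    using less.prems by (rule sign_affine_perm_translate)
  also have "\<dots> = jacobi c n"
  proof (cases "n = 1")
    case True
    have "affine_perm 1 c 0 = id"
      by (auto simp: affine_perm_def)
    then show ?thesis
      using True by (simp add: jacobi_def)
  next
    case False
    then obtain p where p: "prime p" "p dvd n"
      using prime_factor_nat by blast
    then obtain m where n: "n = p * m"
      by blast
    have odd: "odd p" "odd m"
      using less.prems(1) n by auto
    then have "m > 0"
      by (simp add: odd_pos)
    then have "m < n"
      using n prime_gt_1_nat[OF p(1)] by simp
    have c: "coprime c (int p)" "coprime c (int m)"
      using less.prems(2) n by auto
    have "sign (affine_perm n c 0) = sign (affine_perm m c 0) * sign (affine_perm p c 0)"
      using sign_affine_perm_mult[OF odd(2,1) c(2,1)] n by (simp add: mult.commute)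
    also have "\<dots> = jacobi c m * Legendre c (int p)"
      using less.IH[OF \<open>m < n\<close> odd(2) c(2)] zolotarev[OF p(1) odd(1) c(1)] by simp
    also have "\<dots> = jacobi c n"
      using jacobi_mult_prime[OF p(1) \<open>m > 0\<close>] n by simp
    finally show ?thesis .
  qed
  finally show ?case .
qed

lemma jacobi_mult:
  assumes "odd n" "coprime x (int n)" "coprime y (int n)"
  shows "jacobi (x * y) n = jacobi x n * jacobi y n"
proof -
  have "jacobi (x * y) n = sign (affine_perm n (x * y) 0)"
    using assms by (simp add: zolotarev_frobenius)
  also have "\<dots> = sign (affine_perm n x 0 \<circ> affine_perm n y 0)"
    by (simp add: affine_perm_compose)
  also have "\<dots> = jacobi x n * jacobi y n"
    using assms by (simp add: sign_compose permutation_affine_perm zolotarev_frobenius)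
  finally show ?thesis .
qed

section \<open>The determinant of Q\<close>

definition cyclic_pow :: "nat \<Rightarrow> 'a :: monoid_mult \<Rightarrow> int \<Rightarrow> 'a" where
  "cyclic_pow n w x = w ^ nat (x mod int n)"

lemma cyclic_pow_cong: "[x = y] (mod int n) \<Longrightarrow> cyclic_pow n w x = cyclic_pow n w y"
  by (simp add: cyclic_pow_def cong_def)

lemma cyclic_pow_step:
  fixes w :: "'a :: comm_ring_1"
  assumes n: "n > 0"
  shows "cyclic_pow n w x - w * cyclic_pow n w (x - 1) = (if int n dvd x then 1 - w ^ n else 0)"
proof -
  have pred: "(x - 1) mod int n = (x mod int n - 1) mod int n"
    by (simp add: mod_diff_left_eq)
  show ?thesis
  proof (cases "int n dvd x")
    case True
    then have "(x - 1) mod int n = int n - 1"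
      using n pred by (simp add: dvd_eq_mod_eq_0 zmod_minus1)
    then have "w * cyclic_pow n w (x - 1) = w ^ n"
      using n by (simp add: cyclic_pow_def nat_diff_distrib flip: power_Suc)
    with True show ?thesis
      by (simp add: cyclic_pow_def dvd_eq_mod_eq_0)
  next
    case False
    then have "0 < x mod int n"
      using n by (simp add: dvd_eq_mod_eq_0 order_le_neq_trans)
    moreover have "x mod int n < int n"
      using n by simp
    ultimately have "(x - 1) mod int n = x mod int n - 1"
      unfolding pred by (intro mod_pos_pos_trivial) auto
    with \<open>0 < x mod int n\<close> have "nat (x mod int n) = Suc (nat ((x - 1) mod int n))"
      by simp
    with False show ?thesis
      by (simp add: cyclic_pow_def)
  qed
qed

lemma prod_if_not_last: "(\<Prod>i = 0..<n. if Suc i < n then c else 1) = c ^ (n - 1)"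
proof (cases n)
  case (Suc m)
  have "(\<Prod>i = 0..<m. if Suc i < Suc m then c else 1) = (\<Prod>i = 0..<m. c)"
    by (rule prod.cong) auto
  then show ?thesis
    using Suc by (simp add: prod.atLeast0_lessThan_Suc)
qed simp

lemma det_unit_bidiagonal:
  "det (mat n n (\<lambda>(i,k). if k = i then 1 else if k = Suc i then - w else 0)) = (1 :: 'a :: comm_ring_1)"
proof -
  let ?L = "mat n n (\<lambda>(i,k). if k = i then 1 else if k = Suc i then - w else (0 :: 'a))"
  have "det ?L = prod_list (diag_mat ?L)"
    by (rule det_upper_triangular) (auto simp: upper_triangular_def)
  then show ?thesis
    by (simp add: prod_list_diag_prod)
qed

lemma unit_bidiagonal_mult_index:
  fixes D :: "'a :: comm_ring_1 mat"
  assumes "D \<in> carrier_mat n n" "i < n" "j < n"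
  shows "(mat n n (\<lambda>(i,k). if k = i then 1 else if k = Suc i then - w else 0) * D) $$ (i, j)
    = D $$ (i, j) - (if Suc i < n then w * D $$ (Suc i, j) else 0)"
proof -
  have "(mat n n (\<lambda>(i,k). if k = i then 1 else if k = Suc i then - w else 0) * D) $$ (i, j)
      = (\<Sum>k = 0..<n. (if k = i then D $$ (k, j) else 0) + (if k = Suc i then - w * D $$ (k, j) else 0))"
    using assms by (simp add: scalar_prod_def) (rule sum.cong, auto)
  then show ?thesis
    using assms by (simp add: sum.distrib)
qed

lemma det_cyclic_pow_mat:
  fixes w :: "'a :: comm_ring_1"
  assumes n: "n > 0"
  shows "det (mat n n (\<lambda>(i,j). cyclic_pow n w (int j - int i))) = (1 - w ^ n) ^ (n - 1)"
proof -
  define D where "D = mat n n (\<lambda>(i,j). cyclic_pow n w (int j - int i))"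
  define L :: "'a mat" where "L = mat n n (\<lambda>(i,k). if k = i then 1 else if k = Suc i then - w else 0)"
  have D: "D \<in> carrier_mat n n" and L: "L \<in> carrier_mat n n"
    by (simp_all add: D_def L_def)
  have D_entry: "D $$ (i, j) = cyclic_pow n w (int j - int i)" if "i < n" "j < n" for i j
    using that by (simp add: D_def)
  \<comment> \<open>subtracting \<open>w\<close> times the next row makes \<open>D\<close> lower triangular\<close>
  have LD_upper: "(L * D) $$ (i, j) = (if i = j then if Suc i < n then 1 - w ^ n else 1 else 0)"
    if "i < n" "j < n" "i \<le> j" for i j
  proof (cases "Suc i < n")
    case True
    have "int n dvd int j - int i \<longleftrightarrow> i = j"
      using that zdvd_not_zless[of "int j - int i" "int n"] by (cases "i < j") auto
    have "(L * D) $$ (i, j) = cyclic_pow n w (int j - int i) - w * cyclic_pow n w (int j - int i - 1)"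
      using unit_bidiagonal_mult_index[OF D that(1,2)] True that by (simp add: L_def D_entry algebra_simps)
    also have "\<dots> = (if i = j then 1 - w ^ n else 0)"
      by (simp only: cyclic_pow_step[OF n] \<open>int n dvd int j - int i \<longleftrightarrow> i = j\<close>)
    finally show ?thesis
      using True by simp
  next
    case False
    then show ?thesis
      using that unit_bidiagonal_mult_index[OF D that(1,2)] by (simp add: L_def D_entry cyclic_pow_def)
  qed
  have "det (L * D) = prod_list (diag_mat (L * D))"
    by (rule det_lower_triangular[of n]) (use L D LD_upper in auto)
  also have "\<dots> = (\<Prod>i = 0..<n. if Suc i < n then 1 - w ^ n else 1)"
    using L D LD_upper by (simp add: prod_list_diag_prod)
  also have "\<dots> = (1 - w ^ n) ^ (n - 1)"
    by (rule prod_if_not_last)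
  finally show ?thesis
    using det_mult[OF L D] det_unit_bidiagonal[of n w] unfolding D_def L_def by simp
qed

lemma det_permute_rows_cols:
  fixes D :: "'a :: comm_ring_1 mat"
  assumes p: "p permutes {0..<n}" and s: "s permutes {0..<n}" and D: "D \<in> carrier_mat n n"
  shows "det (mat n n (\<lambda>(i,j). D $$ (p i, s j))) = of_int (sign p * sign s) * det D"
proof -
  define A where "A = mat n n (\<lambda>(i,j). D $$ (i, s j))"
  have A: "A \<in> carrier_mat n n"
    by (simp add: A_def)
  have "mat n n (\<lambda>(i,j). D $$ (p i, s j)) = mat n n (\<lambda>(i,j). A $$ (p i, j))"
    using permutes_in_image[OF p] by (intro eq_matI) (simp_all add: A_def)
  then have "det (mat n n (\<lambda>(i,j). D $$ (p i, s j))) = of_int (sign p) * det A"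
    using det_permute_rows[OF A p] by simp
  moreover have "transpose_mat A = mat n n (\<lambda>(i,j). transpose_mat D $$ (s i, j))"
    using D permutes_in_image[OF s] by (intro eq_matI) (simp_all add: A_def)
  then have "det (transpose_mat A) = of_int (sign s) * det D"
    using det_permute_rows[of "transpose_mat D" n s] D s by (simp add: det_transpose)
  then have "det A = of_int (sign s) * det D"
    using det_transpose[OF A] by simp
  ultimately show ?thesis
    by simp
qed

lemma frac_of_int_divide:
  assumes "n > 0"
  shows "frac (real_of_int x / real n) = real_of_int (x mod int n) / real n"
proof -
  have "real_of_int x = real n * of_int (x div int n) + real_of_int (x mod int n)"
    by (metis mult_div_mod_eq of_int_add of_int_mult of_int_of_nat_eq)
  then have "real_of_int x / real n = of_int (x div int n) + real_of_int (x mod int n) / real n"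
    using assms by (simp add: field_simps)
  moreover have "real_of_int (x mod int n) < real_of_int (int n)"
    using assms by (simp only: of_int_less_iff) simp
  then have "0 \<le> real_of_int (x mod int n) / real n" "real_of_int (x mod int n) / real n < 1"
    using assms by (simp_all add: divide_less_eq)
  ultimately show ?thesis
    by (simp add: frac_eq frac_add_of_int_left)
qed

lemma powr_root_power:
  fixes q :: real
  assumes "n > 0" "q > 0"
  shows "(q powr (-1 / real n)) ^ n = 1 / q"
proof -
  have "(q powr (-1 / real n)) ^ n = (q powr (-1 / real n)) powr real n"
    using assms by (simp add: powr_realpow)
  also have "\<dots> = q powr (-1 / real n * real n)"
    by (rule powr_powr)
  also have "\<dots> = 1 / q"
    using assms by (simp add: powr_minus_divide)
  finally show ?thesis .
qed

lemma dim_Qmat [simp]: "dim_row (Qmat n a q) = n" "dim_col (Qmat n a q) = n"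
  by (simp_all add: Qmat_def)

lemma Qmat_carrier: "Qmat n a q \<in> carrier_mat n n"
  by (simp add: carrier_matI)

lemma Qmat_eq_cyclic_pow:
  assumes "n > 0" "q > 0" "j < n" "k < n"
  shows "Qmat n a q $$ (j,k) = cyclic_pow n (q powr (-1 / real n)) (a * int (j+1) - (a+1) * int (k+1))"
proof -
  let ?r = "(a * int (j+1) - (a+1) * int (k+1)) mod int n"
  have "Qmat n a q $$ (j,k) = q powr (- frac (real_of_int (a * int (j+1) - (a+1) * int (k+1)) / real n))"
    using assms by (simp add: Qmat_def)
  also have "\<dots> = q powr (- (real_of_int ?r / real n))"
    by (simp only: frac_of_int_divide[OF assms(1)])
  also have "\<dots> = (q powr (-1 / real n)) powr real (nat ?r)"
    using assms by (simp add: powr_powr)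
  also have "\<dots> = (q powr (-1 / real n)) ^ nat ?r"
    using assms by (intro powr_realpow) simp
  finally show ?thesis
    unfolding cyclic_pow_def .
qed

lemma Qmat_entry_cong:
  assumes "n > 0" "q > 0" "j < n" "k < n" "j' < n" "k' < n"
    and "[a * int (j+1) - (a+1) * int (k+1) = a * int (j'+1) - (a+1) * int (k'+1)] (mod int n)"
  shows "Qmat n a q $$ (j,k) = Qmat n a q $$ (j',k')"
  using assms by (simp add: Qmat_eq_cyclic_pow cyclic_pow_cong)

lemma det_Qmat_coprime:
  assumes n: "odd n" and q: "q > 0" and cop: "coprime (a * (a+1)) (int n)"
  shows "det (Qmat n a q) = of_int (jacobi (a * (a+1)) n) * (1 - 1 / q) ^ (n - 1)"
proof -
  have "n > 0"
    using n by (rule odd_pos)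
  define w where "w = q powr (-1 / real n)"
  define D where "D = mat n n (\<lambda>(i,j). cyclic_pow n w (int j - int i))"
  \<comment> \<open>\<open>Q\<close> is \<open>D\<close> with rows permuted by \<open>j \<mapsto> 1 - a j\<close> and columns by \<open>k \<mapsto> -(a+1) k\<close>\<close>
  define \<rho> where "\<rho> = affine_perm n (-a) 1"
  define \<sigma> where "\<sigma> = affine_perm n (-(a+1)) 0"
  have "coprime a (int n)" "coprime (a+1) (int n)"
    using cop by auto
  then have c: "coprime (-a) (int n)" "coprime (-(a+1)) (int n)"
    by (simp_all only: coprime_minus_left_iff)
  have "Qmat n a q = mat n n (\<lambda>(j,k). D $$ (\<rho> j, \<sigma> k))"
  proof (rule eq_matI)
    fix j k
    assume "j < dim_row (mat n n (\<lambda>(j,k). D $$ (\<rho> j, \<sigma> k)))" "k < dim_col (mat n n (\<lambda>(j,k). D $$ (\<rho> j, \<sigma> k)))"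
    then have j: "j < n" and k: "k < n"
      by simp_all
    have "[int (\<sigma> k) - int (\<rho> j) = - (a+1) * int k - (- a * int j + 1)] (mod int n)"
      using j k unfolding \<sigma>_def \<rho>_def by (intro cong_diff) (simp_all add: of_nat_affine_perm cong_def)
    also have "- (a+1) * int k - (- a * int j + 1) = a * int (j+1) - (a+1) * int (k+1)"
      by (simp add: algebra_simps)
    finally show "Qmat n a q $$ (j,k) = mat n n (\<lambda>(j,k). D $$ (\<rho> j, \<sigma> k)) $$ (j,k)"
      using j k \<open>n > 0\<close> q
      by (simp add: D_def \<rho>_def \<sigma>_def w_def affine_perm_less Qmat_eq_cyclic_pow cyclic_pow_cong)
  qed (simp_all add: Qmat_def)
  then have "det (Qmat n a q) = of_int (sign \<rho> * sign \<sigma>) * det D"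
    using c by (simp add: det_permute_rows_cols \<rho>_def \<sigma>_def affine_perm_permutes D_def)
  also have "sign \<rho> * sign \<sigma> = jacobi (-a) n * jacobi (-(a+1)) n"
    unfolding \<rho>_def \<sigma>_def by (simp only: zolotarev_frobenius[OF n c(1)] zolotarev_frobenius[OF n c(2)])
  also have "\<dots> = jacobi (a * (a+1)) n"
    using jacobi_mult[OF n c] by (simp only: minus_mult_minus)
  also have "det D = (1 - w ^ n) ^ (n - 1)"
    unfolding D_def by (rule det_cyclic_pow_mat[OF \<open>n > 0\<close>])
  also have "w ^ n = 1 / q"
    unfolding w_def by (rule powr_root_power[OF \<open>n > 0\<close> q])
  finally show ?thesis .
qed

lemma not_coprime_imp_dvd_mult:
  assumes "n > 0" "\<not> coprime x (int n)"
  shows "\<exists>j. 0 < j \<and> j < n \<and> int n dvd x * int j"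
proof -
  define d where "d = gcd x (int n)"
  obtain x' where x': "x = d * x'"
    unfolding d_def by (meson dvd_def gcd_dvd1)
  obtain n' where n': "int n = d * n'"
    unfolding d_def by (meson dvd_def gcd_dvd2)
  have "d > 0" "d \<noteq> 1"
    using assms unfolding d_def by (simp_all add: coprime_iff_gcd_eq_1)
  then have "d > 1"
    by linarith
  moreover have "0 < d * n'"
    using n' assms(1) by simp
  ultimately have "0 < n'" "n' < int n"
    using n' by (simp_all add: zero_less_mult_iff)
  moreover have "x * n' = x' * int n"
    using x' n' by simp
  ultimately show ?thesis
    by (intro exI[of _ "nat n'"]) auto
qed

lemma Qmat_row_eq:
  assumes "n > 0" "q > 0" "j < n" "int n dvd a * int j"
  shows "row (Qmat n a q) 0 = row (Qmat n a q) j"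
proof (rule eq_vecI)
  fix k
  assume "k < dim_vec (row (Qmat n a q) j)"
  then have k: "k < n"
    by simp
  have shift: "a * int (j+1) - (a+1) * int (k+1) = (a * int (0+1) - (a+1) * int (k+1)) + a * int j"
    by (simp add: algebra_simps)
  have "[a * int (0+1) - (a+1) * int (k+1) = a * int (j+1) - (a+1) * int (k+1)] (mod int n)"
    unfolding shift using assms(4) by (simp add: cong_iff_dvd_diff)
  then have "Qmat n a q $$ (0, k) = Qmat n a q $$ (j, k)"
    using assms k by (intro Qmat_entry_cong) simp_all
  then show "row (Qmat n a q) 0 $ k = row (Qmat n a q) j $ k"
    using assms k by simp
qed simp

lemma Qmat_col_eq:
  assumes "n > 0" "q > 0" "k < n" "int n dvd (a+1) * int k"
  shows "col (Qmat n a q) 0 = col (Qmat n a q) k"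
proof (rule eq_vecI)
  fix j
  assume "j < dim_vec (col (Qmat n a q) k)"
  then have j: "j < n"
    by simp
  have shift: "a * int (j+1) - (a+1) * int (0+1) = (a * int (j+1) - (a+1) * int (k+1)) + (a+1) * int k"
    by (simp add: algebra_simps)
  have "[a * int (j+1) - (a+1) * int (0+1) = a * int (j+1) - (a+1) * int (k+1)] (mod int n)"
    unfolding shift using assms(4) by (simp add: cong_iff_dvd_diff)
  then have "Qmat n a q $$ (j, 0) = Qmat n a q $$ (j, k)"
    using assms j by (intro Qmat_entry_cong) simp_all
  then show "col (Qmat n a q) 0 $ j = col (Qmat n a q) k $ j"
    using assms j by simp
qed simp

lemma det_Qmat_not_coprime:
  assumes n: "n > 0" and q: "q > 0" and "\<not> coprime (a * (a+1)) (int n)"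
  shows "det (Qmat n a q) = 0"
proof -
  note Q = Qmat_carrier[of n a q]
  consider "\<not> coprime a (int n)" | "\<not> coprime (a+1) (int n)"
    using assms(3) by auto
  then show ?thesis
  proof cases
    case 1
    then obtain j where "0 < j" "j < n" "int n dvd a * int j"
      using not_coprime_imp_dvd_mult n by blast
    then show ?thesis
      using det_identical_rows[OF Q, of 0 j] Qmat_row_eq[OF n q] by simp
  next
    case 2
    then obtain k where "0 < k" "k < n" "int n dvd (a+1) * int k"
      using not_coprime_imp_dvd_mult n by blast
    then show ?thesis
      using det_identical_columns[OF Q, of 0 k] Qmat_col_eq[OF n q] by simp
  qed
qed

section \<open>The inverse of Q\<close>

lemma sum_periodic_affine_reindex:
  fixes g :: "int \<Rightarrow> 'a :: comm_monoid_add"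
  assumes "coprime c (int n)" and periodic: "\<And>y. g (y mod int n) = g y"
  shows "(\<Sum>l = 0..<n. g (c * int l + t)) = (\<Sum>r = 0..<n. g (int r))"
proof -
  have "(\<Sum>l = 0..<n. g (c * int l + t)) = (\<Sum>l = 0..<n. g (int (affine_perm n c t l)))"
    by (intro sum.cong) (simp_all add: of_nat_affine_perm periodic)
  also have "\<dots> = (\<Sum>r = 0..<n. g (int r))"
    using sum.reindex_bij_betw[OF permutes_imp_bij[OF affine_perm_permutes[OF assms(1)]]] by simp
  finally show ?thesis .
qed

lemma sum_indicator_dvd:
  fixes f :: "int \<Rightarrow> 'a :: semiring_1"
  assumes "n > 0" and periodic: "\<And>y. f (y mod int n) = f y"
  shows "(\<Sum>r = 0..<n. of_bool (int n dvd int r - k) * f (int r)) = f k"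
proof -
  have "int n dvd int r - k \<longleftrightarrow> r = nat (k mod int n)" if "r < n" for r
    using that assms(1) by (auto simp: mod_eq_dvd_iff[symmetric])
  then have "(\<Sum>r = 0..<n. of_bool (int n dvd int r - k) * f (int r))
      = (\<Sum>r = 0..<n. if r = nat (k mod int n) then f (int r) else 0)"
    by (intro sum.cong) auto
  also have "\<dots> = f (k mod int n)"
    using assms(1) by (simp add: nat_less_iff)
  finally show ?thesis
    by (simp add: periodic)
qed

lemma coprime_dvd_mult_diff_iff:
  assumes "coprime a (int n)" "j < n" "k < n"
  shows "int n dvd a * (int j - int k) \<longleftrightarrow> j = k"
proof -
  have "int n dvd a * (int j - int k) \<longleftrightarrow> [int j = int k] (mod int n)"
    using assms(1) by (simp add: coprime_dvd_mult_right_iff coprime_commute cong_iff_dvd_diff)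
  also have "\<dots> \<longleftrightarrow> j = k"
    using assms(2,3) by (simp add: cong_def)
  finally show ?thesis .
qed

lemma Qmat_mult_fent:
  assumes n: "n > 0" and q: "q > 0" and cop: "coprime (a * (a+1)) (int n)" and "j < n" "k < n"
  shows "(Qmat n a q * mat n n (\<lambda>(j,k). fent n a q (j+1) (k+1))) $$ (j,k) = (if j = k then 1 - 1 / q else 0)"
proof -
  define w where "w = q powr (-1 / real n)"
  define A where "A = a * int (j+1)"
  define K where "K = a * int (k+1)"
  \<comment> \<open>the \<open>l\<close>-th summand below is \<open>g ((a+1)(l+1))\<close>, and \<open>g\<close> is \<open>n\<close>-periodic\<close>
  define g where "g y = cyclic_pow n w (A - y) * (of_bool (int n dvd y - K) - w * of_bool (int n dvd y - (K + 1)))" for y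
  have periodic_pow: "cyclic_pow n w (A - y mod int n) = cyclic_pow n w (A - y)" for y
    by (rule cyclic_pow_cong) (simp add: cong_def mod_diff_right_eq)
  have periodic_dvd: "int n dvd y mod int n - z \<longleftrightarrow> int n dvd y - z" for y z
    by (simp only: dvd_eq_mod_eq_0 mod_diff_left_eq)
  have "(Qmat n a q * mat n n (\<lambda>(j,k). fent n a q (j+1) (k+1))) $$ (j,k)
      = (\<Sum>l = 0..<n. Qmat n a q $$ (j,l) * fent n a q (l+1) (k+1))"
    using assms by (simp add: scalar_prod_def Qmat_def)
  also have "\<dots> = (\<Sum>l = 0..<n. g ((a+1) * int l + (a+1)))"
  proof (rule sum.cong)
    fix l
    assume "l \<in> {0..<n}"
    moreover have "(a+1) * int (l+1) = (a+1) * int l + (a+1)"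
      by (simp add: algebra_simps)
    ultimately show "Qmat n a q $$ (j,l) * fent n a q (l+1) (k+1) = g ((a+1) * int l + (a+1))"
      using assms by (simp add: Qmat_eq_cyclic_pow fent_def g_def A_def K_def w_def diff_diff_eq)
  qed simp
  also have "\<dots> = (\<Sum>r = 0..<n. g (int r))"
    using cop by (intro sum_periodic_affine_reindex) (simp_all add: g_def periodic_pow periodic_dvd)
  also have "\<dots> = (\<Sum>r = 0..<n. of_bool (int n dvd int r - K) * cyclic_pow n w (A - int r))
      - w * (\<Sum>r = 0..<n. of_bool (int n dvd int r - (K + 1)) * cyclic_pow n w (A - int r))"
  proof -
    have "g y = of_bool (int n dvd y - K) * cyclic_pow n w (A - y)
        - w * (of_bool (int n dvd y - (K + 1)) * cyclic_pow n w (A - y))" for y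
      by (simp add: g_def algebra_simps)
    then show ?thesis
      by (simp only: sum_subtractf sum_distrib_left)
  qed
  also have "\<dots> = cyclic_pow n w (A - K) - w * cyclic_pow n w (A - (K + 1))"
    using sum_indicator_dvd[OF n, of "\<lambda>y. cyclic_pow n w (A - y)"] periodic_pow by simp
  also have "\<dots> = (if int n dvd A - K then 1 - 1 / q else 0)"
    using cyclic_pow_step[OF n, of w "A - K"] powr_root_power[OF n q] by (simp add: w_def diff_diff_eq)
  also have "A - K = a * (int j - int k)"
    by (simp add: A_def K_def algebra_simps)
  also have "int n dvd a * (int j - int k) \<longleftrightarrow> j = k"
    using cop assms(4,5) by (intro coprime_dvd_mult_diff_iff) simp_all
  finally show ?thesis .
qed

lemma Qmat_Qinv:
  assumes n: "n > 0" and q: "q > 0" "q \<noteq> 1" and cop: "coprime (a * (a+1)) (int n)"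
  shows "Qmat n a q * Qinv n a q = 1\<^sub>m n" "Qinv n a q * Qmat n a q = 1\<^sub>m n"
proof -
  define F where "F = mat n n (\<lambda>(j,k). fent n a q (j+1) (k+1))"
  note Q = Qmat_carrier[of n a q]
  have F: "F \<in> carrier_mat n n" and Qinv: "Qinv n a q \<in> carrier_mat n n"
    by (simp_all add: F_def Qinv_def)
  have QF: "(Qmat n a q * F) $$ (i,j) = (if i = j then 1 - 1 / q else 0)" if "i < n" "j < n" for i j
    unfolding F_def using Qmat_mult_fent[OF n q(1) cop that] .
  have "Qmat n a q * Qinv n a q = (1 / (1 - 1 / q)) \<cdot>\<^sub>m (Qmat n a q * F)"
    unfolding Qinv_def F_def[symmetric] by (rule mult_smult_distrib[OF Q F])
  also have "\<dots> = 1\<^sub>m n"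
    using Q F q by (intro eq_matI) (simp_all add: QF del: index_mult_mat(1))
  finally show QQinv: "Qmat n a q * Qinv n a q = 1\<^sub>m n" .
  then show "Qinv n a q * Qmat n a q = 1\<^sub>m n"
    by (rule mat_mult_left_right_inverse[OF Q Qinv])
qed

theorem proposition2p1:
  fixes n :: nat and a :: int and q :: real
  assumes "n > 0" and "odd n" and "q > 0" and "q \<noteq> 1"
  shows "det (Qmat n a q) = real_of_int (jacobi (a * (a+1)) n) * (1 - 1 / q) ^ (n - 1)
     \<and> (gcd (a * (a+1)) (int n) = 1 \<longrightarrow>
          Qmat n a q * Qinv n a q = 1\<^sub>m n \<and> Qinv n a q * Qmat n a q = 1\<^sub>m n)"
proof (intro conjI impI)
  show "det (Qmat n a q) = real_of_int (jacobi (a * (a+1)) n) * (1 - 1 / q) ^ (n - 1)"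
  proof (cases "coprime (a * (a+1)) (int n)")
    case True
    then show ?thesis
      using det_Qmat_coprime assms by blast
  next
    case False
    then show ?thesis
      using det_Qmat_not_coprime jacobi_not_coprime assms by simp
  qed
next
  assume "gcd (a * (a+1)) (int n) = 1"
  then have "coprime (a * (a+1)) (int n)"
    by (simp add: coprime_iff_gcd_eq_1)
  then show "Qmat n a q * Qinv n a q = 1\<^sub>m n" "Qinv n a q * Qmat n a q = 1\<^sub>m n"
    using Qmat_Qinv assms by blast+
qed

end
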